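(* Consider a road network given by a directed graph with node set $\mathcal{N}_r$ and a position map $P:\mathcal{N}_r\to\mathbb{R}^2$, and a maximum speed $v_{\max}>0$. For each transport assignment $k$ let $n_k=n_k[1],\dots,n_k[N_k]$ be its route (a path of nodes), $t^S_k$ its earliest start time and $t^D_k$ its latest arrival time, and define for $a=1,\dots,N_k$ $$\underline{t}_k[a]=t^S_k+\sum_{m=1}^{a-1}\frac{\|P(n_k[m+1])-P(n_k[m])\|_2}{v_{\max}},\qquad \bar{t}_k[a]=t^D_k-\sum_{m=a}^{N_k-1}\frac{\|P(n_k[m+1])-P(n_k[m])\|_2}{v_{\max}}.$$ Define the coordination function $g(i,j)\in\{0,1\}$ by $g(i,j)=1$ iff there exist indices $a,b$ with $P(n_i[a])=P(n_j[b])$, $P(n_i[a+1])=P(n_j[b+1])$, $[\underline{t}_i[a],\bar{t}_i[a]]\cap[\underline{t}_j[b],\bar{t}_j[b]]\neq\emptyset$ and $[\underline{t}_i[a+1],\bar{t}_i[a+1]]\cap[\underline{t}_j[b+1],\bar{t}_j[b+1]]\neq\emptyset$; otherwise $g(i,j)=0$. Fix $p\in\mathbb{R}^3$. For each assignment $k$ let $$\mathcal{R}_k=\left\{\begin{bmatrix}P(n_k[a])\\ \underline{t}_k[a]\end{bmatrix}: a=1,\dots,N_k\right\}\cup\left\{\begin{bmatrix}P(n_k[a])\\ \bar{t}_k[a]\end{bmatrix}: a=1,\dots,N_k\right\}\subset\mathbb{R}^3,$$ and $\mathcal{I}_k=[\min_{v\in\mathcal{R}_k}p^\top v,\ \max_{v\in\mathcal{R}_k}p^\top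 v]$. Then for any pair of transport assignments $(i,j)$, $\mathcal{I}_i\cap\mathcal{I}_j=\emptyset$ implies $g(i,j)=0$.
   Context: A transport assignment consists of a start node, a destination node, an earliest start time and a latest arrival time; its route is a given path in the graph from start to destination. The quantities $\underline{t}_k[a],\bar{t}_k[a]$ are lower and upper bounds on the time at which a vehicle implementing assignment $k$ at speed at most $v_{\max}$ can be at node $n_k[a]$. *)

theory Defs
  imports "HOL-Analysis.Analysis"
begin

text \<open>Routes are lists of nodes, indexed from 0 (paper index a corresponds to list index a-1).\<close>

definition seglen :: "('n \<Rightarrow> real^2) \<Rightarrow> 'n list \<Rightarrow> nat \<Rightarrow> real" where
  "seglen P ns m = norm (P (ns ! (Suc m)) - P (ns ! m))"

definition t_low :: "('n \<Rightarrow> real^2) \<Rightarrow> real \<Rightarrow> real \<Rightarrow> 'n list \<Rightarrow> nat \<Rightarrow> real" where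
  "t_low P vmax tS ns a = tS + (\<Sum>m<a. seglen P ns m / vmax)"

definition t_up :: "('n \<Rightarrow> real^2) \<Rightarrow> real \<Rightarrow> real \<Rightarrow> 'n list \<Rightarrow> nat \<Rightarrow> real" where
  "t_up P vmax tD ns a = tD - (\<Sum>m\<in>{a..<length ns - 1}. seglen P ns m / vmax)"

definition coord :: "('n \<Rightarrow> real^2) \<Rightarrow> real \<Rightarrow> ('k \<Rightarrow> 'n list) \<Rightarrow> ('k \<Rightarrow> real) \<Rightarrow> ('k \<Rightarrow> real)
    \<Rightarrow> 'k \<Rightarrow> 'k \<Rightarrow> bool" where
  "coord P vmax route tS tD i j \<longleftrightarrow>
     (\<exists>a b. Suc a < length (route i) \<and> Suc b < length (route j) \<and>
        P (route i ! a) = P (route j ! b) \<and>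
        P (route i ! Suc a) = P (route j ! Suc b) \<and>
        {t_low P vmax (tS i) (route i) a .. t_up P vmax (tD i) (route i) a} \<inter>
        {t_low P vmax (tS j) (route j) b .. t_up P vmax (tD j) (route j) b} \<noteq> {} \<and>
        {t_low P vmax (tS i) (route i) (Suc a) .. t_up P vmax (tD i) (route i) (Suc a)} \<inter>
        {t_low P vmax (tS j) (route j) (Suc b) .. t_up P vmax (tD j) (route j) (Suc b)} \<noteq> {})"

definition pt3 :: "real^2 \<Rightarrow> real \<Rightarrow> real^3" where
  "pt3 x t = vector [x $ 1, x $ 2, t]"

definition Rset :: "('n \<Rightarrow> real^2) \<Rightarrow> real \<Rightarrow> 'n list \<Rightarrow> real \<Rightarrow> real \<Rightarrow> (real^3) set" where
  "Rset P vmax ns tS tD =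
     {pt3 (P (ns ! a)) (t_low P vmax tS ns a) | a. a < length ns} \<union>
     {pt3 (P (ns ! a)) (t_up P vmax tD ns a) | a. a < length ns}"

definition Iint :: "real^3 \<Rightarrow> ('n \<Rightarrow> real^2) \<Rightarrow> real \<Rightarrow> 'n list \<Rightarrow> real \<Rightarrow> real \<Rightarrow> real set" where
  "Iint p P vmax ns tS tD =
     {Min ((\<lambda>v. p \<bullet> v) ` Rset P vmax ns tS tD) .. Max ((\<lambda>v. p \<bullet> v) ` Rset P vmax ns tS tD)}"

end

theory Submission
  imports Defs
begin

text \<open>If g(i,j) = 1, some common position x is occupied by both assignments at a common
  time t inside both of its time windows. The functional v \<mapsto> p \<bullet> v is affine in the time
  coordinate, so its value at (x, t) lies between its values at the two window endpoints
  (x, t_low) and (x, t_up), which both belong to the respective sets R; hence it lies in both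
  intervals I_i and I_j, contradicting their disjointness.\<close>

lemma inner_pt3: "p \<bullet> pt3 x t = p$1 * x$1 + p$2 * x$2 + p$3 * t"
  unfolding pt3_def inner_vec_def by (simp add: sum_3 vector_3)

lemma inner_pt3_between:
  assumes "t1 \<le> t" "t \<le> t2"
  shows "min (p \<bullet> pt3 x t1) (p \<bullet> pt3 x t2) \<le> p \<bullet> pt3 x t
    \<and> p \<bullet> pt3 x t \<le> max (p \<bullet> pt3 x t1) (p \<bullet> pt3 x t2)"
proof (cases "p$3 \<ge> 0")
  case True
  then have "p$3 * t1 \<le> p$3 * t" "p$3 * t \<le> p$3 * t2"
    using assms by (auto intro: mult_left_mono)
  then show ?thesis unfolding inner_pt3 by linarith
next
  case False
  then have "p$3 * t \<le> p$3 * t1" "p$3 * t2 \<le> p$3 * t"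
    using assms by (auto intro: mult_left_mono_neg)
  then show ?thesis unfolding inner_pt3 by linarith
qed

lemma between_in_Min_Max:
  fixes z :: "'a :: linorder"
  assumes "finite S" "u \<in> S" "v \<in> S" "min u v \<le> z" "z \<le> max u v"
  shows "z \<in> {Min S .. Max S}"
proof -
  have "Min S \<le> min u v" "max u v \<le> Max S"
    using assms(1-3) by (simp_all add: Min_le Max_ge)
  then have "Min S \<le> z" "z \<le> Max S"
    using assms(4,5) order_trans by blast+
  then show ?thesis by simp
qed

lemma finite_Rset: "finite (Rset P vmax ns tS tD)"
proof -
  have "Rset P vmax ns tS tD =
      (\<lambda>a. pt3 (P (ns ! a)) (t_low P vmax tS ns a)) ` {..<length ns} \<union>
      (\<lambda>a. pt3 (P (ns ! a)) (t_up P vmax tD ns a)) ` {..<length ns}"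
    unfolding Rset_def by auto
  then show ?thesis by simp
qed

lemma pt3_in_Iint:
  assumes "a < length ns" "t_low P vmax tS ns a \<le> t" "t \<le> t_up P vmax tD ns a"
  shows "p \<bullet> pt3 (P (ns ! a)) t \<in> Iint p P vmax ns tS tD"
proof -
  have low: "p \<bullet> pt3 (P (ns ! a)) (t_low P vmax tS ns a) \<in> (\<lambda>v. p \<bullet> v) ` Rset P vmax ns tS tD"
    and up: "p \<bullet> pt3 (P (ns ! a)) (t_up P vmax tD ns a) \<in> (\<lambda>v. p \<bullet> v) ` Rset P vmax ns tS tD"
    unfolding Rset_def using assms(1) by blast+
  show ?thesis
    unfolding Iint_def
    using between_in_Min_Max[OF finite_imageI[OF finite_Rset] low up]
      inner_pt3_between[OF assms(2,3)] by blast
qed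

theorem proposition6:
  fixes E :: "'n \<Rightarrow> 'n \<Rightarrow> bool"
    and P :: "'n \<Rightarrow> real^2"
    and vmax :: real
    and route :: "'k \<Rightarrow> 'n list"
    and tS tD :: "'k \<Rightarrow> real"
    and p :: "real^3"
    and i j :: 'k
  assumes vmax_pos: "vmax > 0"
    and routes_paths: "\<And>k. route k \<noteq> [] \<and>
                (\<forall>m. Suc m < length (route k) \<longrightarrow> E (route k ! m) (route k ! Suc m))"
    and disj: "Iint p P vmax (route i) (tS i) (tD i) \<inter> Iint p P vmax (route j) (tS j) (tD j) = {}"
  shows "\<not> coord P vmax route tS tD i j"
proof
  assume "coord P vmax route tS tD i j"
  then obtain a b t where ab: "Suc a < length (route i)" "Suc b < length (route j)"
    and same_node: "P (route i ! a) = P (route j ! b)"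
    and ti: "t \<in> {t_low P vmax (tS i) (route i) a .. t_up P vmax (tD i) (route i) a}"
    and tj: "t \<in> {t_low P vmax (tS j) (route j) b .. t_up P vmax (tD j) (route j) b}"
    unfolding coord_def by blast
  have "p \<bullet> pt3 (P (route i ! a)) t \<in> Iint p P vmax (route i) (tS i) (tD i)"
    using ab ti by (intro pt3_in_Iint) auto
  moreover have "p \<bullet> pt3 (P (route j ! b)) t \<in> Iint p P vmax (route j) (tS j) (tD j)"
    using ab tj by (intro pt3_in_Iint) auto
  ultimately show False using disj same_node by auto
qed

end
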